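(* Let $X$ be a real Banach space, $f\in\Gamma_0(X)$, $S_f\ne\emptyset$, $\varepsilon\ge0$. Then $$\mathrm{Er}\{\mathrm{Ptb}^w(f,\varepsilon)\}>0\Rightarrow\mathrm{Er}\{\mathrm{Ptb}^w_l(f,\varepsilon)\}>0\Rightarrow\varepsilon\le|\partial f|_{\rm bd},$$ and $$\varepsilon<|\partial f|_{\rm bd}\Rightarrow\mathrm{Er}\{\mathrm{Ptb}(f,\varepsilon)\}>0\Rightarrow\mathrm{Er}\{\mathrm{Ptb}_l(f,\varepsilon)\}>0.$$
   Context: $X^*$ is the dual, $\mathbb{B}^*$ its closed unit ball. $\Gamma_0(X)$: proper convex lsc extended-real-valued functions on $X$. For convex $f$, $\partial f(x):=\{x^*\in X^*\mid \langle x^*,u-x\rangle\le f(u)-f(x)\ \forall u\in X\}$. $d(x,S)=\inf_{u\in S}\|u-x\|$, $d(x,\emptyset)=+\infty$, $\inf\emptyset=+\infty$. $S_f:=\{x\mid f(x)\le0\}$, $S_f^=:=\{x\mid f(x)=0\}$. Global error bound modulus: $\mathrm{Er}\,f:=\inf_{f(x)>0}\frac{f(x)}{d(x,S_f)}$. $|\partial f|_{\rm bd}:=\inf_{f(x)=0} d(0,\mathrm{bd}\,\partial f(x))$ (boundary in norm topology of $X^*$). For $x\in S_f^=$, $\varepsilon,\delta\ge0$: $\tau(f,x,\varepsilon,\delta):=\inf_{u:\,f(u)\ge-\varepsilon\|u-x\|-\delta} d(0,\partial f(u))$ if $0\notin\mathrm{int}\,\partial f(x)$, and $:=d(0,\mathrm{bd}\,\partial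 f(x))$ if $0\in\mathrm{int}\,\partial f(x)$. For $\varepsilon\ge0$: $g\in\mathrm{Ptb}(f,\varepsilon)$ if $S_g\ne\emptyset$, $g=f+p$ with $p:X\to\mathbb{R}$ convex, and there exist $x\in S_f^=$ and $\xi\ge0$ such that $\xi+|\partial f|_{\rm bd}-\tau(f,x,\xi,|p(x)|)\le\varepsilon$ and $|p(u)-p(x)|\le\xi\|u-x\|$ for all $u\in X$. $g\in\mathrm{Ptb}^w(f,\varepsilon)$ if $S_g\ne\emptyset$, $g=f+p$ with $p:X\to\mathbb{R}$ convex, and there is $x\in S_f^=$ with $|p(u)-p(x)|\le\varepsilon\|u-x\|$ for all $u$. $\mathrm{Ptb}_l(f,\varepsilon):=\{g\mid g(u)-f(u)=\langle x^*,u-x\rangle\ \forall u,\ \text{for some } x\in S_f^=,\ \xi\ge0,\ x^*\in\xi\mathbb{B}^*\text{ with }\xi+|\partial f|_{\rm bd}-\tau(f,x,\xi,0)\le\varepsilon\}$; $\mathrm{Ptb}^w_l(f,\varepsilon):=\{g\mid g(u)-f(u)=\langle x^*,u-x\rangle\ \forall u,\ \text{for some } x\in S_f^=,\ x^*\in\varepsilon\mathbb{B}^*\}$. For each such family $\mathcal{F}$, $\mathrm{Er}\{\mathcal{F}\}:=\inf_{g\in\mathcal{F}}\mathrm{Er}\,g$. *)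

theory Defs
  imports "HOL-Analysis.Analysis"
begin

text \<open>Setting: X is a real Banach space (type class banach), its dual X* is the
space of bounded linear functionals 'a \<Rightarrow>L real with the operator norm
(norm topology).\<close>

definition proper_fun :: "('a \<Rightarrow> ereal) \<Rightarrow> bool" where
  "proper_fun f \<longleftrightarrow> (\<forall>x. f x \<noteq> -\<infinity>) \<and> (\<exists>x. f x \<noteq> \<infinity>)"

definition convex_fun :: "('a::real_vector \<Rightarrow> ereal) \<Rightarrow> bool" where
  "convex_fun f \<longleftrightarrow> convex {(x, r::real). f x \<le> ereal r}"

definition lsc_fun :: "('a::topological_space \<Rightarrow> ereal) \<Rightarrow> bool" where
  "lsc_fun f \<longleftrightarrow> (\<forall>x. \<forall>c. c < f x \<longrightarrow> (\<forall>\<^sub>F u in at x. c < f u))"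

definition Gamma0 :: "('a::real_normed_vector \<Rightarrow> ereal) set" where
  "Gamma0 = {f. proper_fun f \<and> convex_fun f \<and> lsc_fun f}"

definition subdiff :: "('a::real_normed_vector \<Rightarrow> ereal) \<Rightarrow> 'a \<Rightarrow> ('a \<Rightarrow>\<^sub>L real) set" where
  "subdiff f x = (if \<bar>f x\<bar> \<noteq> \<infinity> then
      {xs. \<forall>u. ereal (blinfun_apply xs (u - x)) \<le> f u - f x} else {})"

text \<open>Distance to a set, with d(x, empty) = +infinity.\<close>
definition dst :: "'b::real_normed_vector \<Rightarrow> 'b set \<Rightarrow> ereal" where
  "dst x S = (INF u\<in>S. ereal (norm (u - x)))"

definition Sf :: "('a \<Rightarrow> ereal) \<Rightarrow> 'a set" where
  "Sf f = {x. f x \<le> 0}"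

definition Sfeq :: "('a \<Rightarrow> ereal) \<Rightarrow> 'a set" where
  "Sfeq f = {x. f x = 0}"

definition Er :: "('a::real_normed_vector \<Rightarrow> ereal) \<Rightarrow> ereal" where
  "Er f = (INF x\<in>{x. f x > 0}. f x / dst x (Sf f))"

definition bdmod :: "('a::real_normed_vector \<Rightarrow> ereal) \<Rightarrow> ereal" where
  "bdmod f = (INF x\<in>Sfeq f. dst 0 (frontier (subdiff f x)))"

definition tau :: "('a::real_normed_vector \<Rightarrow> ereal) \<Rightarrow> 'a \<Rightarrow> real \<Rightarrow> real \<Rightarrow> ereal" where
  "tau f x \<epsilon> \<delta> = (if 0 \<in> interior (subdiff f x) then dst 0 (frontier (subdiff f x))
      else (INF u\<in>{u. f u \<ge> ereal (- \<epsilon> * norm (u - x) - \<delta>)}. dst 0 (subdiff f u)))"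

text \<open>The condition  xi + |df|_bd - tau <= eps  is written as  xi + |df|_bd <= eps + tau
  to avoid the undefined expression infinity - infinity.\<close>
definition Ptb :: "('a::real_normed_vector \<Rightarrow> ereal) \<Rightarrow> real \<Rightarrow> ('a \<Rightarrow> ereal) set" where
  "Ptb f \<epsilon> = {g. Sf g \<noteq> {} \<and> (\<exists>p::'a \<Rightarrow> real. convex_on UNIV p \<and>
      g = (\<lambda>u. f u + ereal (p u)) \<and>
      (\<exists>x\<in>Sfeq f. \<exists>\<xi>\<ge>0. ereal \<xi> + bdmod f \<le> ereal \<epsilon> + tau f x \<xi> \<bar>p x\<bar> \<and>
          (\<forall>u. \<bar>p u - p x\<bar> \<le> \<xi> * norm (u - x))))}"

definition Ptbw :: "('a::real_normed_vector \<Rightarrow> ereal) \<Rightarrow> real \<Rightarrow> ('a \<Rightarrow> ereal) set" where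
  "Ptbw f \<epsilon> = {g. Sf g \<noteq> {} \<and> (\<exists>p::'a \<Rightarrow> real. convex_on UNIV p \<and>
      g = (\<lambda>u. f u + ereal (p u)) \<and>
      (\<exists>x\<in>Sfeq f. \<forall>u. \<bar>p u - p x\<bar> \<le> \<epsilon> * norm (u - x)))}"

definition Ptbl :: "('a::real_normed_vector \<Rightarrow> ereal) \<Rightarrow> real \<Rightarrow> ('a \<Rightarrow> ereal) set" where
  "Ptbl f \<epsilon> = {g. \<exists>x\<in>Sfeq f. \<exists>\<xi>\<ge>0. \<exists>xs::'a \<Rightarrow>\<^sub>L real. norm xs \<le> \<xi> \<and>
      ereal \<xi> + bdmod f \<le> ereal \<epsilon> + tau f x \<xi> 0 \<and>
      g = (\<lambda>u. f u + ereal (blinfun_apply xs (u - x)))}"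

definition Ptbwl :: "('a::real_normed_vector \<Rightarrow> ereal) \<Rightarrow> real \<Rightarrow> ('a \<Rightarrow> ereal) set" where
  "Ptbwl f \<epsilon> = {g. \<exists>x\<in>Sfeq f. \<exists>xs::'a \<Rightarrow>\<^sub>L real. norm xs \<le> \<epsilon> \<and>
      g = (\<lambda>u. f u + ereal (blinfun_apply xs (u - x)))}"

definition ErF :: "('a::real_normed_vector \<Rightarrow> ereal) set \<Rightarrow> ereal" where
  "ErF F = (INF g\<in>F. Er g)"

end

theory Submission
  imports Defs
begin

text \<open>
  Necessity: if \<parallel>y\<parallel> < \<epsilon> for a boundary point y of \<partial>f(x), f(x) = 0, pick y' \<in> \<partial>f(x) and
  z \<notin> \<partial>f(x) close to y, and a point v where z violates the subgradient inequality.  Tilting f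
  by the small linear functional z - 2y' moves the level set into a half-space that stays far from
  v compared to the value at v, so linear perturbations have arbitrarily small error bound moduli.

  Sufficiency: let g = f + p be a perturbation in Ptb f \<epsilon> and g(u) > 0.  If 0 \<in> int \<partial>f(x),
  the ball of radius \<xi> + 2c around 0 lies in \<partial>f(x), so g grows at rate c away from x and the
  segment [x, u] meets the level set close to u.  Otherwise, if u were farther than g(u)/c from the
  level set, Ekeland's principle would give a point w outside it at which g + c\<parallel>\<cdot> - w\<parallel> is minimal;
  the sum rule, a Hahn-Banach sandwich argument, then yields a subgradient of f at w of norm at most
  \<xi> + c, which the condition defining Ptb f \<epsilon> rules out.  The two remaining implications hold
  because linear perturbations are perturbations.
\<close>

section \<open>Sublinear functionals and the Hahn-Banach theorem\<close>

definition sublinear :: "('a::real_vector \<Rightarrow> real) \<Rightarrow> bool" where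
  "sublinear q \<longleftrightarrow> (\<forall>x y. q (x + y) \<le> q x + q y) \<and> (\<forall>c x. 0 \<le> c \<longrightarrow> q (c *\<^sub>R x) = c * q x)"

lemma sublinear_add_le: "sublinear q \<Longrightarrow> q (x + y) \<le> q x + q y"
  unfolding sublinear_def by blast

lemma sublinear_scaleR: "sublinear q \<Longrightarrow> 0 \<le> c \<Longrightarrow> q (c *\<^sub>R x) = c * q x"
  unfolding sublinear_def by blast

lemma sublinear_0: "sublinear q \<Longrightarrow> q 0 = 0"
  using sublinear_scaleR[of q 0 0] by simp

lemma sublinear_neg_le: "sublinear q \<Longrightarrow> - q (- x) \<le> q x"
  using sublinear_add_le[of q x "- x"] sublinear_0[of q] by simp

text \<open>Homogeneity needs to be checked in one direction only: the other one is the same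
  inequality for the factor 1/c.\<close>
lemma sublinearI:
  assumes add: "\<And>x y. q (x + y) \<le> q x + q y" and q0: "q 0 = 0"
    and scale: "\<And>c x. 0 < c \<Longrightarrow> q (c *\<^sub>R x) \<le> c * q x"
  shows "sublinear q"
  unfolding sublinear_def
proof (intro conjI allI impI add)
  fix c :: real and x assume "0 \<le> c"
  show "q (c *\<^sub>R x) = c * q x"
  proof (cases "c = 0")
    case False
    with \<open>0 \<le> c\<close> have c: "0 < c" by simp
    have "q x = q (inverse c *\<^sub>R (c *\<^sub>R x))" using c by simp
    also have "\<dots> \<le> inverse c * q (c *\<^sub>R x)" using c by (intro scale) simp
    finally have "c * q x \<le> q (c *\<^sub>R x)" using c by (simp add: field_simps)
    with scale[OF c, of x] show ?thesis by simp
  qed (simp add: q0)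
qed

lemma le_cINF_add:
  fixes f g :: "_ \<Rightarrow> real"
  assumes "A \<noteq> {}" "B \<noteq> {}" and le: "\<And>a b. a \<in> A \<Longrightarrow> b \<in> B \<Longrightarrow> z \<le> f a + g b"
  shows "z \<le> (INF a\<in>A. f a) + (INF b\<in>B. g b)"
proof -
  have "z - g b \<le> (INF a\<in>A. f a)" if "b \<in> B" for b
    using assms(1) le[OF _ that] by (intro cINF_greatest) (auto simp: algebra_simps)
  then have "z - (INF a\<in>A. f a) \<le> (INF b\<in>B. g b)"
    using assms(2) by (intro cINF_greatest) (auto simp: algebra_simps)
  then show ?thesis by simp
qed

lemma sublinear_INF_chain:
  assumes ne: "Q \<noteq> {}" and sub: "\<And>q. q \<in> Q \<Longrightarrow> sublinear q"
    and lb: "\<And>q x. q \<in> Q \<Longrightarrow> b x \<le> q x"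
    and chain: "\<And>q1 q2. q1 \<in> Q \<Longrightarrow> q2 \<in> Q \<Longrightarrow> q1 \<le> q2 \<or> q2 \<le> q1"
  shows "sublinear (\<lambda>x. INF q\<in>Q. q x)"
proof -
  have bdd: "bdd_below ((\<lambda>q. q x) ` Q)" for x
    unfolding bdd_below_def using lb by blast
  have le_INF: "(INF q\<in>Q. q x) \<le> q x" if "q \<in> Q" for q x
    using bdd that by (rule cINF_lower)
  show ?thesis
  proof (rule sublinearI)
    fix x y
    show "(INF q\<in>Q. q (x + y)) \<le> (INF q\<in>Q. q x) + (INF q\<in>Q. q y)"
    proof (rule le_cINF_add[OF ne ne])
      fix q1 q2 assume q12: "q1 \<in> Q" "q2 \<in> Q"
      \<comment> \<open>the smaller of the two functionals bounds both terms\<close>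
      obtain q where "q \<in> Q" "q \<le> q1" "q \<le> q2" using chain[OF q12] q12 by blast
      then show "(INF q\<in>Q. q (x + y)) \<le> q1 x + q2 y"
        using le_INF[of q "x + y"] sublinear_add_le[OF sub, of q x y]
        by (smt (verit) le_funD)
    qed
  next
    have "(\<lambda>q. q 0) ` Q = {0}" using ne sublinear_0[OF sub] by force
    then show "(INF q\<in>Q. q 0) = 0" by simp
  next
    fix c :: real and x assume c: "0 < c"
    have "(INF q\<in>Q. q (c *\<^sub>R x)) / c \<le> (INF q\<in>Q. q x)"
    proof (rule cINF_greatest[OF ne])
      fix q assume "q \<in> Q"
      then have "(INF q\<in>Q. q (c *\<^sub>R x)) \<le> c * q x"
        using c cINF_lower[OF bdd, of q "c *\<^sub>R x"] sublinear_scaleR[OF sub, of q c x] by simp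
      then show "(INF q\<in>Q. q (c *\<^sub>R x)) / c \<le> q x" using c by (simp add: divide_le_eq mult.commute)
    qed
    then show "(INF q\<in>Q. q (c *\<^sub>R x)) \<le> c * (INF q\<in>Q. q x)" using c
      by (simp add: divide_le_eq mult.commute)
  qed
qed

text \<open>Lowering q in the direction a keeps it sublinear and below q, and brings its value at -a
  down to at most -q a.  So a minimal sublinear functional is odd, hence linear.\<close>
definition sublinear_reduce :: "('a::real_vector \<Rightarrow> real) \<Rightarrow> 'a \<Rightarrow> 'a \<Rightarrow> real" where
  "sublinear_reduce q a x = (INF t\<in>{0..}. q (x + t *\<^sub>R a) - t * q a)"

lemma sublinear_reduce_lower_bound:
  assumes "sublinear q" "0 \<le> t"
  shows "- q (- x) \<le> q (x + t *\<^sub>R a) - t * q a"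
  using sublinear_add_le[OF assms(1), of "x + t *\<^sub>R a" "- x"] sublinear_scaleR[OF assms] by simp

lemma sublinear_reduce_le:
  assumes "sublinear q" "0 \<le> t"
  shows "sublinear_reduce q a x \<le> q (x + t *\<^sub>R a) - t * q a"
  unfolding sublinear_reduce_def using assms sublinear_reduce_lower_bound[OF assms(1)]
  by (intro cINF_lower) (auto simp: bdd_below_def)

lemma sublinear_reduce_below: "sublinear q \<Longrightarrow> sublinear_reduce q a x \<le> q x"
  using sublinear_reduce_le[of q 0] by simp

lemma sublinear_reduce_neg: "sublinear q \<Longrightarrow> sublinear_reduce q a (- a) \<le> - q a"
  using sublinear_reduce_le[of q 1 a "- a"] sublinear_0[of q] by simp

lemma sublinear_sublinear_reduce:
  assumes q: "sublinear q"
  shows "sublinear (sublinear_reduce q a)"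
proof (rule sublinearI)
  fix x y
  show "sublinear_reduce q a (x + y) \<le> sublinear_reduce q a x + sublinear_reduce q a y"
    unfolding sublinear_reduce_def[of q a x] sublinear_reduce_def[of q a y]
  proof (rule le_cINF_add)
    fix s t :: real assume "s \<in> {0..}" "t \<in> {0..}"
    then have "sublinear_reduce q a (x + y) \<le> q ((x + s *\<^sub>R a) + (y + t *\<^sub>R a)) - (s + t) * q a"
      using sublinear_reduce_le[OF q, of "s + t" a "x + y"] by (simp add: algebra_simps)
    also have "\<dots> \<le> (q (x + s *\<^sub>R a) - s * q a) + (q (y + t *\<^sub>R a) - t * q a)"
      using sublinear_add_le[OF q, of "x + s *\<^sub>R a" "y + t *\<^sub>R a"] by argo
    finally show "sublinear_reduce q a (x + y) \<le> \<dots>" .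
  qed auto
next
  show "sublinear_reduce q a 0 = 0"
    using sublinear_reduce_below[OF q, of a 0] sublinear_reduce_le[OF q]
      sublinear_reduce_lower_bound[OF q, of _ 0] sublinear_0[OF q]
    unfolding sublinear_reduce_def by (intro antisym cINF_greatest) fastforce+
next
  fix c :: real and x assume c: "0 < c"
  have "sublinear_reduce q a (c *\<^sub>R x) / c \<le> sublinear_reduce q a x"
    unfolding sublinear_reduce_def[of q a x]
  proof (rule cINF_greatest)
    fix t :: real assume t: "t \<in> {0..}"
    have "sublinear_reduce q a (c *\<^sub>R x) \<le> q (c *\<^sub>R (x + t *\<^sub>R a)) - (c * t) * q a"
      using sublinear_reduce_le[OF q, of "c * t" a "c *\<^sub>R x"] c t by (simp add: algebra_simps)
    also have "\<dots> = c * (q (x + t *\<^sub>R a) - t * q a)"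
      using sublinear_scaleR[OF q, of c "x + t *\<^sub>R a"] c by (simp add: algebra_simps)
    finally show "sublinear_reduce q a (c *\<^sub>R x) / c \<le> q (x + t *\<^sub>R a) - t * q a"
      using c by (simp add: divide_le_eq mult.commute)
  qed auto
  then show "sublinear_reduce q a (c *\<^sub>R x) \<le> c * sublinear_reduce q a x"
    using c by (simp add: divide_le_eq mult.commute)
qed

lemma linear_if_sublinear_minimal:
  assumes q: "sublinear q" and minimal: "\<And>q'. sublinear q' \<Longrightarrow> q' \<le> q \<Longrightarrow> q' = q"
  shows "linear q"
proof -
  have odd: "q (- a) = - q a" for a
  proof -
    have "sublinear_reduce q a = q"
      using minimal sublinear_sublinear_reduce[OF q] sublinear_reduce_below[OF q]
      by (simp add: le_fun_def)
    then have "q (- a) \<le> - q a" using sublinear_reduce_neg[OF q, of a] by simp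
    with sublinear_neg_le[OF q, of a] show ?thesis by simp
  qed
  show ?thesis
  proof (rule linearI)
    fix x y
    show "q (x + y) = q x + q y"
      using sublinear_add_le[OF q, of x y] sublinear_add_le[OF q, of "- x" "- y"] odd[of "x + y"]
        odd[of x] odd[of y] by (simp add: add.commute)
  next
    fix c :: real and x
    show "q (c *\<^sub>R x) = c *\<^sub>R q x"
      using sublinear_scaleR[OF q, of c x] sublinear_scaleR[OF q, of "- c" "- x"] odd[of x]
      by (cases "0 \<le> c") auto
  qed
qed

theorem Hahn_Banach_sublinear:
  assumes p: "sublinear p"
  shows "\<exists>l. linear l \<and> l \<le> p"
proof -
  define A where "A = {q. sublinear q \<and> q \<le> p}"
  have "\<exists>m\<in>A. \<forall>q\<in>A. q \<le> m \<longrightarrow> q = m"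
  proof (rule predicate_Zorn)
    show "partial_order_on A (relation_of (\<lambda>m q. q \<le> m) A)"
      by (rule partial_order_on_relation_ofI) auto
  next
    fix C assume C: "C \<in> Chains (relation_of (\<lambda>m q. q \<le> m) A)"
    then have CA: "C \<subseteq> A" and chain: "\<And>q1 q2. q1 \<in> C \<Longrightarrow> q2 \<in> C \<Longrightarrow> q1 \<le> q2 \<or> q2 \<le> q1"
      unfolding Chains_def relation_of_def by auto
    show "\<exists>u\<in>A. \<forall>q\<in>C. u \<le> q"
    proof (cases "C = {}")
      case True
      then show ?thesis using p unfolding A_def by auto
    next
      case False
      have lb: "- p (- x) \<le> q x" if "q \<in> C" for q x
        using sublinear_neg_le[of q x] le_funD[of q p "- x"] that CA unfolding A_def by force
      have "sublinear (\<lambda>x. INF q\<in>C. q x)"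
        using CA lb chain False unfolding A_def by (intro sublinear_INF_chain) auto
      moreover have "(\<lambda>x. INF q\<in>C. q x) \<le> q" if "q \<in> C" for q
        using lb that unfolding le_fun_def bdd_below_def by (meson cINF_lower bdd_belowI2)
      moreover obtain q where "q \<in> C" using False by blast
      ultimately show ?thesis
        using CA unfolding A_def by (blast intro: order_trans)
    qed
  qed
  then obtain m where "m \<in> A" and "\<And>q. q \<in> A \<Longrightarrow> q \<le> m \<Longrightarrow> q = m" by blast
  then have "linear m"
    unfolding A_def by (intro linear_if_sublinear_minimal) (auto intro: order_trans)
  with \<open>m \<in> A\<close> show ?thesis unfolding A_def by blast
qed

corollary Hahn_Banach_sublinear_at:
  assumes p: "sublinear p"
  shows "\<exists>l. linear l \<and> l \<le> p \<and> l a = p a"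
proof -
  obtain l where l: "linear l" "l \<le> sublinear_reduce p a"
    using Hahn_Banach_sublinear[OF sublinear_sublinear_reduce[OF p]] by blast
  then have "l \<le> p" using sublinear_reduce_below[OF p] by (auto simp: le_fun_def intro: order_trans)
  moreover have "- l a \<le> - p a"
    using le_funD[OF l(2), of "- a"] sublinear_reduce_neg[OF p, of a] linear_neg[OF l(1), of a]
    by simp
  ultimately show ?thesis using l(1) le_funD[of l p a] by auto
qed

lemma blinfun_of_linear_le:
  fixes l :: "'a::real_normed_vector \<Rightarrow> real"
  assumes l: "linear l" and K: "0 \<le> K" and le: "\<And>x. l x \<le> K * norm x"
  shows "\<exists>L. blinfun_apply L = l \<and> norm L \<le> K"
proof -
  have bound: "norm (l x) \<le> K * norm x" for x
    using le[of x] le[of "- x"] linear_neg[OF l, of x] by simp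
  then have "bounded_linear l"
    by (intro bounded_linear.intro[OF l] bounded_linear_axioms.intro) (metis mult.commute)
  then show ?thesis
    using bound K
    by (intro exI[of _ "Blinfun l"]) (simp add: bounded_linear_Blinfun_apply norm_blinfun_bound)
qed

corollary norming_functional:
  fixes v :: "'a::real_normed_vector"
  shows "\<exists>L::'a \<Rightarrow>\<^sub>L real. norm L \<le> 1 \<and> blinfun_apply L v = norm v"
proof -
  have "sublinear (norm :: 'a \<Rightarrow> real)"
    unfolding sublinear_def by (auto simp: norm_triangle_ineq)
  then obtain l where "linear l" "l \<le> norm" "l v = norm v"
    using Hahn_Banach_sublinear_at by blast
  then show ?thesis
    using blinfun_of_linear_le[of l 1] by (auto simp: le_fun_def)
qed

section \<open>The sandwich theorem\<close>

lemma harmonic_weights: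
  fixes t1 t2 :: real
  assumes t: "0 < t1" "0 < t2"
  obtains s T where "0 \<le> s" "s \<le> 1" "0 < T" "(1 - s) * t1 = T" "s * t2 = T"
    "(1 - s) / T = 1 / t1" "s / T = 1 / t2"
proof
  have s1: "1 - t1 / (t1 + t2) = t2 / (t1 + t2)" using t by (simp add: field_simps)
  show "0 \<le> t1 / (t1 + t2)" "t1 / (t1 + t2) \<le> 1" "0 < t1 * t2 / (t1 + t2)"
    "(1 - t1 / (t1 + t2)) * t1 = t1 * t2 / (t1 + t2)" "t1 / (t1 + t2) * t2 = t1 * t2 / (t1 + t2)"
    using t unfolding s1 by (auto simp: field_simps)
  show "(1 - t1 / (t1 + t2)) / (t1 * t2 / (t1 + t2)) = 1 / t1"
    "t1 / (t1 + t2) / (t1 * t2 / (t1 + t2)) = 1 / t2"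
    using t unfolding s1 by (auto simp: divide_simps)
qed

text \<open>If F is convex on D \<ni> 0 with F 0 = 0, Q is convex and F + Q \<ge> 0 on D, this is a sublinear
  functional lying below F on D and satisfying d(-h) \<le> Q h; any linear functional below it
  separates F from -Q.\<close>
definition sandwich_gauge :: "'a set \<Rightarrow> ('a::real_vector \<Rightarrow> real) \<Rightarrow> ('a \<Rightarrow> real) \<Rightarrow> 'a \<Rightarrow> real" where
  "sandwich_gauge D F Q v = (INF (t, a)\<in>{0<..} \<times> D. (F a + Q (a - t *\<^sub>R v)) / t)"

locale sandwich =
  fixes D :: "'a::real_normed_vector set" and F Q :: "'a \<Rightarrow> real"
  assumes convex_F: "convex_on D F" and zero_in_D: "0 \<in> D" and F_0: "F 0 = 0"
    and convex_Q: "convex_on UNIV Q" and Q_0: "Q 0 = 0"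
    and nonneg: "\<And>a. a \<in> D \<Longrightarrow> 0 \<le> F a + Q a"
begin

abbreviation "separator \<equiv> sandwich_gauge D F Q"

lemma index_nonempty: "({0<..} :: real set) \<times> D \<noteq> {}"
  using zero_in_D by (metis SigmaI empty_iff greaterThan_iff zero_less_one)

lemma separator_lower_bound:
  assumes t: "0 < t" and a: "a \<in> D"
  shows "- Q v \<le> (F a + Q (a - t *\<^sub>R v)) / t"
proof -
  define s where "s = 1 / (1 + t)"
  have s: "0 \<le> s" "s \<le> 1" "(1 + t) * s = 1" "(1 + t) * (1 - s) = t"
    using t unfolding s_def by (auto simp: field_simps)
  have "F (s *\<^sub>R a) \<le> s * F a"
    using convex_onD[OF convex_F s(1,2) zero_in_D a] F_0 by simp
  moreover have "Q (s *\<^sub>R a) \<le> (1 - s) * Q v + s * Q (a - t *\<^sub>R v)"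
  proof -
    have "s *\<^sub>R a = (s * t) *\<^sub>R v + s *\<^sub>R (a - t *\<^sub>R v)"
      by (simp add: algebra_simps)
    moreover have "s * t = 1 - s" using s(3) by (simp add: algebra_simps)
    ultimately show ?thesis using convex_onD[OF convex_Q s(1,2)] by simp
  qed
  moreover have "s *\<^sub>R a \<in> D"
    using convexD_alt[OF convex_on_imp_convex[OF convex_F] zero_in_D a s(1,2)] by simp
  ultimately have "0 \<le> s * F a + ((1 - s) * Q v + s * Q (a - t *\<^sub>R v))"
    using nonneg[of "s *\<^sub>R a"] by linarith
  then have "0 \<le> s * (F a + Q (a - t *\<^sub>R v)) + (1 - s) * Q v"
    by (simp add: algebra_simps)
  then have "0 \<le> (1 + t) * (s * (F a + Q (a - t *\<^sub>R v)) + (1 - s) * Q v)"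
    using t by simp
  also have "\<dots> = ((1 + t) * s) * (F a + Q (a - t *\<^sub>R v)) + ((1 + t) * (1 - s)) * Q v"
    by (simp only: distrib_left mult.assoc)
  also have "\<dots> = (F a + Q (a - t *\<^sub>R v)) + t * Q v"
    unfolding s(3,4) by simp
  finally show ?thesis using t by (simp add: field_simps)
qed

lemma separator_le:
  assumes "0 < t" "a \<in> D"
  shows "separator v \<le> (F a + Q (a - t *\<^sub>R v)) / t"
proof -
  have "bdd_below ((\<lambda>(t, a). (F a + Q (a - t *\<^sub>R v)) / t) ` ({0<..} \<times> D))"
    by (rule bdd_belowI2[where m = "- Q v"]) (auto intro: separator_lower_bound)
  then show ?thesis
    unfolding sandwich_gauge_def by (rule cINF_lower2[where x = "(t, a)"]) (use assms in auto)
qed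

lemma separator_ge: "- Q v \<le> separator v"
  unfolding sandwich_gauge_def
  by (rule cINF_greatest[OF index_nonempty]) (auto intro: separator_lower_bound)

lemma separator_le_F: "a \<in> D \<Longrightarrow> separator a \<le> F a"
  using separator_le[of 1 a a] Q_0 by simp

lemma separator_neg_le_Q: "separator (- h) \<le> Q h"
  using separator_le[of 1 0 "- h"] zero_in_D F_0 by simp

lemma separator_add_le:
  assumes 1: "0 < t1" "a1 \<in> D" and 2: "0 < t2" "a2 \<in> D"
  shows "separator (x + y) \<le> (F a1 + Q (a1 - t1 *\<^sub>R x)) / t1 + (F a2 + Q (a2 - t2 *\<^sub>R y)) / t2"
proof -
  obtain s T where s: "0 \<le> s" "s \<le> 1" "0 < T" "(1 - s) * t1 = T" "s * t2 = T"
    "(1 - s) / T = 1 / t1" "s / T = 1 / t2"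
    using harmonic_weights[OF 1(1) 2(1)] by blast
  define a where "a = (1 - s) *\<^sub>R a1 + s *\<^sub>R a2"
  have a: "a \<in> D"
    unfolding a_def by (rule convexD_alt[OF convex_on_imp_convex[OF convex_F] 1(2) 2(2) s(1,2)])
  have "a - T *\<^sub>R (x + y) = (1 - s) *\<^sub>R (a1 - t1 *\<^sub>R x) + s *\<^sub>R (a2 - t2 *\<^sub>R y)"
  proof -
    have "T *\<^sub>R (x + y) = ((1 - s) * t1) *\<^sub>R x + (s * t2) *\<^sub>R y"
      using s(4,5) by (simp add: scaleR_right_distrib)
    then show ?thesis unfolding a_def by (simp add: algebra_simps)
  qed
  then have le: "F a + Q (a - T *\<^sub>R (x + y))
      \<le> (1 - s) * (F a1 + Q (a1 - t1 *\<^sub>R x)) + s * (F a2 + Q (a2 - t2 *\<^sub>R y))"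
    using convex_onD[OF convex_F s(1,2) 1(2) 2(2)]
      convex_onD[OF convex_Q s(1,2), of "a1 - t1 *\<^sub>R x" "a2 - t2 *\<^sub>R y"]
    unfolding a_def by (simp add: algebra_simps)
  have "separator (x + y) \<le> (F a + Q (a - T *\<^sub>R (x + y))) / T"
    by (rule separator_le[OF s(3) a])
  also have "\<dots> \<le> ((1 - s) * (F a1 + Q (a1 - t1 *\<^sub>R x)) + s * (F a2 + Q (a2 - t2 *\<^sub>R y))) / T"
    using le s(3) by (simp add: divide_right_mono)
  also have "\<dots> = (1 - s) / T * (F a1 + Q (a1 - t1 *\<^sub>R x)) + s / T * (F a2 + Q (a2 - t2 *\<^sub>R y))"
    by (simp add: add_divide_distrib)
  finally show ?thesis unfolding s(6,7) by simp
qed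

lemma separator_scaleR_le:
  assumes c: "0 < c" and t: "0 < t" and a: "a \<in> D"
  shows "separator (c *\<^sub>R v) \<le> c * ((F a + Q (a - t *\<^sub>R v)) / t)"
proof -
  have eq: "a - (t / c) *\<^sub>R (c *\<^sub>R v) = a - t *\<^sub>R v" using c by simp
  have "separator (c *\<^sub>R v) \<le> (F a + Q (a - t *\<^sub>R v)) / (t / c)"
    using separator_le[of "t / c" a "c *\<^sub>R v"] t a c unfolding eq by simp
  also have "\<dots> = c * ((F a + Q (a - t *\<^sub>R v)) / t)" by simp
  finally show ?thesis .
qed

lemma sublinear_separator: "sublinear separator"
proof (rule sublinearI)
  fix x y
  show "separator (x + y) \<le> separator x + separator y"
    unfolding sandwich_gauge_def[of D F Q x] sandwich_gauge_def[of D F Q y]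
    by (rule le_cINF_add[OF index_nonempty index_nonempty]) (auto intro: separator_add_le)
next
  show "separator 0 = 0"
    using separator_le_F[OF zero_in_D] separator_ge[of 0] F_0 Q_0 by simp
next
  fix c :: real and v assume c: "0 < c"
  have "separator (c *\<^sub>R v) / c \<le> separator v"
    unfolding sandwich_gauge_def[of D F Q v]
    by (rule cINF_greatest[OF index_nonempty])
      (use c in \<open>auto simp: pos_divide_le_eq mult.commute dest: separator_scaleR_le[OF c]\<close>)
  then show "separator (c *\<^sub>R v) \<le> c * separator v"
    using c by (simp add: pos_divide_le_eq mult_ac)
qed

end

theorem sandwich_theorem:
  fixes F Q :: "'a::real_normed_vector \<Rightarrow> real"
  assumes "convex_on D F" "0 \<in> D" "F 0 = 0" "convex_on UNIV Q"
    and nonneg: "\<And>a. a \<in> D \<Longrightarrow> 0 \<le> F a + Q a"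
    and K: "0 \<le> K" "\<And>h. Q h \<le> K * norm h"
  shows "\<exists>L::'a \<Rightarrow>\<^sub>L real. norm L \<le> K \<and> (\<forall>a\<in>D. blinfun_apply L a \<le> F a)
    \<and> (\<forall>h. - blinfun_apply L h \<le> Q h)"
proof -
  have "Q 0 = 0" using K(2)[of 0] nonneg[OF \<open>0 \<in> D\<close>] \<open>F 0 = 0\<close> by simp
  with assms interpret sandwich D F Q by unfold_locales
  obtain l where l: "linear l" "l \<le> separator"
    using Hahn_Banach_sublinear[OF sublinear_separator] by blast
  have neg: "- l h \<le> Q h" for h
    using le_funD[OF l(2), of "- h"] separator_neg_le_Q[of h] linear_neg[OF l(1), of h] by simp
  have "l h \<le> K * norm h" for h
    using neg[of "- h"] K(2)[of "- h"] linear_neg[OF l(1), of h] by simp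
  then obtain L where "blinfun_apply L = l" "norm L \<le> K"
    using blinfun_of_linear_le[OF l(1) K(1)] by blast
  moreover have "l a \<le> F a" if "a \<in> D" for a
    using le_funD[OF l(2), of a] separator_le_F[OF that] by simp
  ultimately show ?thesis using neg by auto
qed

section \<open>Convex and lower semicontinuous extended-real functions\<close>

lemma convex_funD:
  assumes "convex_fun g" "g a \<le> ereal ra" "g b \<le> ereal rb" "0 \<le> \<theta>" "\<theta> \<le> 1"
  shows "g ((1 - \<theta>) *\<^sub>R a + \<theta> *\<^sub>R b) \<le> ereal ((1 - \<theta>) * ra + \<theta> * rb)"
  using convexD_alt[OF assms(1)[unfolded convex_fun_def], of "(a, ra)" "(b, rb)" \<theta>] assms(2-)
  by simp

lemma convex_fun_add:
  assumes f: "convex_fun f" and p: "convex_on UNIV p"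
  shows "convex_fun (\<lambda>u. f u + ereal (p u))"
  unfolding convex_fun_def
proof (rule convexI, clarsimp)
  fix a ra b rb and s t :: real
  assume a: "f a + ereal (p a) \<le> ereal ra" and b: "f b + ereal (p b) \<le> ereal rb"
    and st: "0 \<le> s" "0 \<le> t" "s + t = 1"
  have minus: "x + ereal y \<le> ereal r \<longleftrightarrow> x \<le> ereal (r - y)" for x y r by (cases x) auto
  have s: "s = 1 - t" using st by simp
  have "f (s *\<^sub>R a + t *\<^sub>R b) \<le> ereal (s * (ra - p a) + t * (rb - p b))"
    using convex_funD[OF f a[unfolded minus] b[unfolded minus], of t] st unfolding s by simp
  also have "\<dots> \<le> ereal (s * ra + t * rb - p (s *\<^sub>R a + t *\<^sub>R b))"
    using convex_onD[OF p, of t a b] st unfolding s by (simp add: algebra_simps)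
  finally show "f (s *\<^sub>R a + t *\<^sub>R b) + ereal (p (s *\<^sub>R a + t *\<^sub>R b)) \<le> ereal (s * ra + t * rb)"
    unfolding minus .
qed

lemma lsc_fun_add_continuous:
  assumes f: "lsc_fun f" "\<And>x. f x \<noteq> -\<infinity>" and p: "continuous_on UNIV p"
  shows "lsc_fun (\<lambda>u. f u + ereal (p u))"
  unfolding lsc_fun_def
proof (intro allI impI)
  fix x c assume c: "c < f x + ereal (p x)"
  show "\<forall>\<^sub>F u in at x. c < f u + ereal (p u)"
  proof (cases c)
    case (real r)
    with c have "ereal (r - p x) < f x" by (cases "f x") auto
    then obtain e where e: "r - p x < e" "ereal e < f x" using ereal_dense2 by force
    have "\<forall>\<^sub>F u in at x. ereal e < f u" using f(1) e(2) unfolding lsc_fun_def by blast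
    moreover have "(p \<longlongrightarrow> p x) (at x)"
      using p by (simp add: continuous_on_def)
    then have "\<forall>\<^sub>F u in at x. r - e < p u"
      using order_tendstoD(1)[of p "p x" "at x" "r - e"] e(1) by simp
    ultimately show ?thesis
    proof eventually_elim
      case (elim u)
      then show ?case using real by (cases "f u") auto
    qed
  next
    case MInf
    have "c < f u + ereal (p u)" for u using MInf f(2)[of u] by (cases "f u") auto
    then show ?thesis by (simp add: always_eventually)
  qed (use c in simp)
qed

lemma convex_on_translate: "convex_on UNIV p \<Longrightarrow> convex_on UNIV (\<lambda>h. p (w + h))"
proof (rule convex_onI)
  fix t :: real and a b assume "convex_on UNIV p" "0 < t" "t < 1"
  moreover have "w + ((1 - t) *\<^sub>R a + t *\<^sub>R b) = (1 - t) *\<^sub>R (w + a) + t *\<^sub>R (w + b)"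
    by (simp add: algebra_simps)
  ultimately show "p (w + ((1 - t) *\<^sub>R a + t *\<^sub>R b)) \<le> (1 - t) * p (w + a) + t * p (w + b)"
    using convex_onD[of UNIV p t "w + a" "w + b"] by simp
qed simp

lemma lsc_fun_eventually_nhds: "lsc_fun g \<Longrightarrow> c < g w \<Longrightarrow> \<forall>\<^sub>F v in nhds w. c < g v"
  unfolding lsc_fun_def eventually_nhds_conv_at by blast

lemma lsc_fun_clamp:
  assumes "lsc_fun g"
  shows "lsc_fun (\<lambda>v. min (max (g v) 0) G)"
  unfolding lsc_fun_def
proof (intro allI impI)
  fix x c assume c: "c < min (max (g x) 0) G"
  show "\<forall>\<^sub>F v in at x. c < min (max (g v) 0) G"
  proof (cases "c < 0")
    case True
    then show ?thesis using c by (intro always_eventually allI) (simp add: less_max_iff_disj)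
  next
    case False
    with c have "c < g x" by (auto simp: less_max_iff_disj)
    then have "\<forall>\<^sub>F v in at x. c < g v" using assms unfolding lsc_fun_def by blast
    then show ?thesis by eventually_elim (use c in \<open>auto simp: less_max_iff_disj\<close>)
  qed
qed

text \<open>A convex function growing at most linearly away from one point is Lipschitz with the same
  constant: on each line its slopes are bounded by the growth rate at infinity.\<close>
lemma convex_on_lipschitz_on:
  fixes p :: "'a::real_normed_vector \<Rightarrow> real"
  assumes p: "convex_on UNIV p" and \<xi>: "0 \<le> \<xi>" and growth: "\<And>u. p u \<le> p x + \<xi> * norm (u - x)"
  shows "\<xi>-lipschitz_on UNIV p"
proof (rule lipschitz_onI[OF _ \<xi>])
  have one_sided: "p b - p a \<le> \<xi> * norm (b - a)" for a b
  proof -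
    define C where "C = p x + \<xi> * norm (a - x) - p a"
    have approx: "p b - p a \<le> \<xi> * norm (b - a) + s * C" if s: "0 < s" "s \<le> 1" for s
    proof -
      define c where "c = a + (1 / s) *\<^sub>R (b - a)"
      have "(1 - s) *\<^sub>R a + s *\<^sub>R c = b"
        using s unfolding c_def by (simp add: algebra_simps)
      then have "p b \<le> (1 - s) * p a + s * p c"
        using convex_onD[OF p, of s a c] s by simp
      have "norm (c - x) = norm ((a - x) + (1 / s) *\<^sub>R (b - a))"
        unfolding c_def by (simp add: algebra_simps)
      also have "\<dots> \<le> norm (a - x) + norm ((1 / s) *\<^sub>R (b - a))"
        by (rule norm_triangle_ineq)
      also have "norm ((1 / s) *\<^sub>R (b - a)) = norm (b - a) / s"
        using s by simp
      finally have "p c \<le> p x + \<xi> * (norm (a - x) + norm (b - a) / s)"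
        using growth[of c] \<xi> by (meson add_left_mono mult_left_mono order_trans)
      then have "s * p c \<le> s * (p x + \<xi> * norm (a - x)) + \<xi> * norm (b - a)"
        using s mult_left_mono[of "p c" _ s] by (simp add: field_simps)
      with \<open>p b \<le> (1 - s) * p a + s * p c\<close> show ?thesis
        unfolding C_def by (simp add: algebra_simps)
    qed
    have "p b - p a \<le> \<xi> * norm (b - a) + inverse (real (Suc n)) * C" for n
      by (rule approx) (auto simp: inverse_le_1_iff)
    moreover have "(\<lambda>n. \<xi> * norm (b - a) + inverse (real (Suc n)) * C) \<longlonglongrightarrow> \<xi> * norm (b - a)"
      using tendsto_add[OF tendsto_const tendsto_mult_right[OF LIMSEQ_inverse_real_of_nat, of C]]
      by simp
    ultimately show ?thesis by (intro LIMSEQ_le_const) auto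
  qed
  fix a b :: 'a
  show "dist (p a) (p b) \<le> \<xi> * dist a b"
    using one_sided[of a b] one_sided[of b a] by (simp add: dist_norm norm_minus_commute abs_le_iff)
qed

section \<open>Ekeland's variational principle\<close>

definition ekeland_region :: "('a::metric_space \<Rightarrow> real) \<Rightarrow> real \<Rightarrow> 'a \<Rightarrow> 'a set" where
  "ekeland_region \<phi> k y = {v. \<phi> v + k * dist v y \<le> \<phi> y}"

lemma ekeland_region_refl: "y \<in> ekeland_region \<phi> k y"
  unfolding ekeland_region_def by simp

lemma ekeland_region_trans:
  assumes "0 \<le> k" "v \<in> ekeland_region \<phi> k y"
  shows "ekeland_region \<phi> k v \<subseteq> ekeland_region \<phi> k y"
proof
  fix z assume "z \<in> ekeland_region \<phi> k v"
  moreover have "k * dist z y \<le> k * dist z v + k * dist v y"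
    using mult_left_mono[OF dist_triangle assms(1)] by (simp add: distrib_left)
  ultimately show "z \<in> ekeland_region \<phi> k y" using assms(2) unfolding ekeland_region_def by simp
qed

lemma ekeland_region_limit:
  assumes lsc: "lsc_fun (\<lambda>v. ereal (\<phi> v))" and y: "y \<longlonglongrightarrow> w" and R: "\<And>n. y n \<in> ekeland_region \<phi> k z"
  shows "w \<in> ekeland_region \<phi> k z"
proof (rule ccontr)
  assume "w \<notin> ekeland_region \<phi> k z"
  then have gap: "0 < \<phi> w + k * dist w z - \<phi> z" unfolding ekeland_region_def by simp
  define \<eta> where "\<eta> = (\<phi> w + k * dist w z - \<phi> z) / 2"
  have sum: "\<phi> z < a + b" if "\<phi> w - \<eta> < a" "k * dist w z - \<eta> < b" for a b
    using that by (simp add: \<eta>_def field_simps)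
  have "\<forall>\<^sub>F v in nhds w. \<phi> w - \<eta> < \<phi> v"
    using lsc_fun_eventually_nhds[OF lsc, of "ereal (\<phi> w - \<eta>)" w] gap unfolding \<eta>_def by simp
  moreover have "\<forall>\<^sub>F v in nhds w. k * dist w z - \<eta> < k * dist v z"
  proof (rule order_tendstoD(1))
    show "((\<lambda>v. k * dist v z) \<longlongrightarrow> k * dist w z) (nhds w)"
      by (intro tendsto_mult tendsto_const tendsto_dist filterlim_ident)
  qed (use gap in \<open>simp add: \<eta>_def\<close>)
  ultimately have "\<forall>\<^sub>F v in nhds w. \<phi> z < \<phi> v + k * dist v z"
    by eventually_elim (rule sum)
  then have "\<forall>\<^sub>F n in sequentially. \<phi> z < \<phi> (y n) + k * dist (y n) z"
    using y by (rule eventually_compose_filterlim)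
  then obtain n where "\<phi> z < \<phi> (y n) + k * dist (y n) z"
    by (meson eventually_sequentially order_refl)
  with R[of n] show False unfolding ekeland_region_def by simp
qed

lemma ekeland_sequence:
  fixes \<phi> :: "'a::metric_space \<Rightarrow> real"
  assumes nonneg: "\<And>v. 0 \<le> \<phi> v" and k: "0 < k"
  obtains y where "y 0 = u" "\<And>n. y (Suc n) \<in> ekeland_region \<phi> k (y n)"
    "\<And>n z. z \<in> ekeland_region \<phi> k (y (Suc n)) \<Longrightarrow> dist z (y (Suc n)) \<le> inverse (real (Suc n)) / k"
proof -
  define R where "R = ekeland_region \<phi> k"
  have R_trans: "v \<in> R y \<Longrightarrow> R v \<subseteq> R y" for v y
    unfolding R_def using k by (intro ekeland_region_trans) auto
  have almost_min: "\<exists>v. v \<in> R x \<and> \<phi> v \<le> Inf (\<phi> ` R x) + inverse (real (Suc n))" for x n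
  proof -
    have "\<phi> ` R x \<noteq> {}" using ekeland_region_refl unfolding R_def by blast
    moreover have "Inf (\<phi> ` R x) < Inf (\<phi> ` R x) + inverse (real (Suc n))" by simp
    ultimately have "\<exists>e\<in>\<phi> ` R x. e < Inf (\<phi> ` R x) + inverse (real (Suc n))"
      by (rule cInf_lessD)
    then show ?thesis by (auto intro: less_imp_le)
  qed
  obtain y where y0: "y 0 = u" and y_R: "\<And>n. y (Suc n) \<in> R (y n)"
    and y_min: "\<And>n. \<phi> (y (Suc n)) \<le> Inf (\<phi> ` R (y n)) + inverse (real (Suc n))"
  proof -
    have "\<exists>y. \<forall>n. (n = 0 \<longrightarrow> y n = u) \<and>
        y (Suc n) \<in> R (y n) \<and> \<phi> (y (Suc n)) \<le> Inf (\<phi> ` R (y n)) + inverse (real (Suc n))"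
      using almost_min by (intro dependent_nat_choice[where P = "\<lambda>n x. n = 0 \<longrightarrow> x = u"
          and Q = "\<lambda>n x y. y \<in> R x \<and> \<phi> y \<le> Inf (\<phi> ` R x) + inverse (real (Suc n))"]) simp_all
    then show ?thesis using that by blast
  qed
  \<comment> \<open>a point of R (y (n+1)) cannot be much better than y (n+1), so it is close to it\<close>
  have "dist z (y (Suc n)) \<le> inverse (real (Suc n)) / k" if "z \<in> R (y (Suc n))" for z n
  proof -
    have "Inf (\<phi> ` R (y n)) \<le> \<phi> z"
      using R_trans[OF y_R] that nonneg by (intro cInf_lower) (auto simp: bdd_below_def)
    moreover have "\<phi> z + k * dist z (y (Suc n)) \<le> \<phi> (y (Suc n))"
      using that unfolding R_def ekeland_region_def by simp
    ultimately have "k * dist z (y (Suc n)) \<le> inverse (real (Suc n))" using y_min[of n] by linarith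
    then show ?thesis using k by (simp add: pos_le_divide_eq mult.commute)
  qed
  with y0 y_R show ?thesis using that unfolding R_def by blast
qed

theorem Ekeland_variational_principle:
  fixes \<phi> :: "'a::complete_space \<Rightarrow> real"
  assumes nonneg: "\<And>v. 0 \<le> \<phi> v" and lsc: "lsc_fun (\<lambda>v. ereal (\<phi> v))" and k: "0 < k"
  shows "\<exists>w. \<phi> w + k * dist w u \<le> \<phi> u \<and> (\<forall>v. v \<noteq> w \<longrightarrow> \<phi> w < \<phi> v + k * dist v w)"
proof -
  define R where "R = ekeland_region \<phi> k"
  define r where "r n = inverse (real (Suc n)) / k" for n
  obtain y where y0: "y 0 = u" and y_R: "\<And>n. y (Suc n) \<in> R (y n)"
    and near: "\<And>n z. z \<in> R (y (Suc n)) \<Longrightarrow> dist z (y (Suc n)) \<le> r n"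
  proof (rule ekeland_sequence[OF nonneg k, of u])
    fix y assume "y 0 = u" "\<And>n. y (Suc n) \<in> ekeland_region \<phi> k (y n)"
      "\<And>n z. z \<in> ekeland_region \<phi> k (y (Suc n)) \<Longrightarrow> dist z (y (Suc n)) \<le> inverse (real (Suc n)) / k"
    then show thesis using that unfolding R_def r_def by blast
  qed
  have r: "r \<longlonglongrightarrow> 0"
    unfolding r_def using tendsto_divide_zero[OF LIMSEQ_inverse_real_of_nat] .
  have R_trans: "v \<in> R y \<Longrightarrow> R v \<subseteq> R y" for v y
    unfolding R_def using k by (intro ekeland_region_trans) auto
  have in_R: "y m \<in> R (y n)" if "n \<le> m" for m n
    using lift_Suc_antimono_le[of "\<lambda>n. R (y n)"] R_trans[OF y_R] that ekeland_region_refl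
    unfolding R_def by blast
  have "Cauchy y"
  proof (rule metric_CauchyI)
    fix e :: real assume "0 < e"
    then obtain N where N: "r N < e / 2"
      using order_tendstoD(2)[OF r, of "e / 2"] by (auto simp: eventually_sequentially)
    have "dist (y m) (y n) < e" if "Suc N \<le> m" "Suc N \<le> n" for m n
      using dist_triangle2[of "y m" "y n" "y (Suc N)"] near[OF in_R[OF that(1)]]
        near[OF in_R[OF that(2)]] N
      by linarith
    then show "\<exists>M. \<forall>m\<ge>M. \<forall>n\<ge>M. dist (y m) (y n) < e" by blast
  qed
  then obtain w where w: "y \<longlonglongrightarrow> w" by (auto simp: Cauchy_convergent_iff convergent_def)
  have w_R: "w \<in> R (y n)" for n
    unfolding R_def
    by (rule ekeland_region_limit[OF lsc LIMSEQ_ignore_initial_segment[OF w, of n]])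
      (use in_R in \<open>simp add: R_def\<close>)
  have "\<phi> w < \<phi> v + k * dist v w" if "v \<noteq> w" for v
  proof (rule ccontr)
    assume "\<not> ?thesis"
    then have "v \<in> R w" unfolding R_def ekeland_region_def by simp
    then have "v \<in> R (y (Suc n))" for n using R_trans[OF w_R] by blast
    then have "dist v w \<le> 2 * r n" for n
      using dist_triangle2[of v w "y (Suc n)"] near[of v n] near[OF w_R, of n] by fastforce
    then have "dist v w \<le> 0"
      by (intro LIMSEQ_le_const[OF tendsto_mult_right_zero[OF r, of 2]]) auto
    with that show False by simp
  qed
  moreover have "\<phi> w + k * dist w u \<le> \<phi> u"
    using w_R[of 0] y0 unfolding R_def ekeland_region_def by simp
  ultimately show ?thesis by blast
qed

section \<open>Subgradients\<close>

lemma mem_of_norm_less_dst_frontier: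
  fixes S :: "'a::real_normed_vector set"
  assumes "0 \<in> interior S" and y: "ereal (norm y) < dst 0 (frontier S)"
  shows "y \<in> S"
proof (rule ccontr)
  assume "y \<notin> S"
  moreover have "0 \<in> S" using assms(1) interior_subset by blast
  ultimately obtain z where z: "z \<in> closed_segment 0 y" "z \<in> frontier S"
    using connected_Int_frontier[OF convex_connected[OF convex_closed_segment]] by blast
  have "dst 0 (frontier S) \<le> ereal (norm z)"
    unfolding dst_def using z(2) by (intro INF_lower2) auto
  also have "\<dots> \<le> ereal (norm y)" using segment_bound1[OF z(1)] by simp
  finally show False using y by simp
qed

lemma convex_fun_local_min_global:
  fixes h :: "'a::real_normed_vector \<Rightarrow> ereal"
  assumes h: "convex_fun h" and hw: "h w = ereal m" and local_min: "\<forall>\<^sub>F v in nhds w. h w \<le> h v"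
  shows "h w \<le> h v"
proof (rule ccontr)
  assume "\<not> h w \<le> h v"
  then have "h v < ereal m" using hw by simp
  then obtain r where "h v < ereal r" "ereal r < ereal m" using ereal_dense2 by blast
  then have r: "h v \<le> ereal r" "r < m" by auto
  define s where "s n = inverse (real (Suc n))" for n
  have s: "s \<longlonglongrightarrow> 0" unfolding s_def by (rule LIMSEQ_inverse_real_of_nat)
  have "(\<lambda>n. (1 - s n) *\<^sub>R w + s n *\<^sub>R v) \<longlonglongrightarrow> (1 - 0) *\<^sub>R w + 0 *\<^sub>R v"
    using s by (intro tendsto_intros)
  then have "\<forall>\<^sub>F n in sequentially. h w \<le> h ((1 - s n) *\<^sub>R w + s n *\<^sub>R v)"
    using eventually_compose_filterlim[OF local_min] by simp
  then obtain n where "h w \<le> h ((1 - s n) *\<^sub>R w + s n *\<^sub>R v)"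
    by (auto simp: eventually_sequentially)
  also have "\<dots> \<le> ereal ((1 - s n) * m + s n * r)"
    using convex_funD[OF h _ r(1), of w m "s n"] hw by (simp add: s_def inverse_le_1_iff)
  also have "(1 - s n) * m + s n * r < m"
    using r(2) by (simp add: s_def algebra_simps)
  finally show False using hw by simp
qed

lemma convex_on_real_of_convex_fun:
  fixes f :: "'a::real_vector \<Rightarrow> ereal"
  assumes f: "convex_fun f" "\<And>v. f v \<noteq> -\<infinity>"
  shows "convex_on {a. f (w + a) \<noteq> \<infinity>} (\<lambda>a. real_of_ereal (f (w + a)))"
proof -
  define D where "D = {a. f (w + a) \<noteq> \<infinity>}"
  have fin: "f (w + a) = ereal (real_of_ereal (f (w + a)))" if "a \<in> D" for a
    using that f(2)[of "w + a"] unfolding D_def by (cases "f (w + a)") auto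
  have comb: "f (w + ((1 - t) *\<^sub>R a + t *\<^sub>R b))
      \<le> ereal ((1 - t) * real_of_ereal (f (w + a)) + t * real_of_ereal (f (w + b)))"
    if "a \<in> D" "b \<in> D" "0 \<le> t" "t \<le> 1" for a b t
  proof -
    have "w + ((1 - t) *\<^sub>R a + t *\<^sub>R b) = (1 - t) *\<^sub>R (w + a) + t *\<^sub>R (w + b)"
      by (simp add: algebra_simps)
    then show ?thesis
      using convex_funD[OF f(1) fin[OF that(1), THEN eq_refl] fin[OF that(2), THEN eq_refl]] that
      by simp
  qed
  have "convex D"
    unfolding convex_alt
  proof (intro ballI allI impI)
    fix a b and t :: real assume "a \<in> D" "b \<in> D" "0 \<le> t \<and> t \<le> 1"
    then show "(1 - t) *\<^sub>R a + t *\<^sub>R b \<in> D" using comb[of a b t] unfolding D_def by auto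
  qed
  then have "convex_on D (\<lambda>a. real_of_ereal (f (w + a)))"
  proof (rule convex_onI[rotated])
    fix t :: real and a b assume t: "0 < t" "t < 1" and ab: "a \<in> D" "b \<in> D"
    then have "(1 - t) *\<^sub>R a + t *\<^sub>R b \<in> D" using convexD_alt[OF \<open>convex D\<close>] by simp
    with comb[OF ab, of t] t show "real_of_ereal (f (w + ((1 - t) *\<^sub>R a + t *\<^sub>R b)))
        \<le> (1 - t) * real_of_ereal (f (w + a)) + t * real_of_ereal (f (w + b))"
      using fin by (metis ereal_less_eq(3) less_imp_le order.strict_implies_order)
  qed
  then show ?thesis unfolding D_def .
qed

text \<open>A special case of the Moreau-Rockafellar sum rule, obtained from the sandwich theorem.\<close>
lemma subgradient_of_minimum:
  fixes f :: "'a::real_normed_vector \<Rightarrow> ereal" and q :: "'a \<Rightarrow> real"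
  assumes f: "convex_fun f" "\<And>v. f v \<noteq> -\<infinity>" and fw: "f w = ereal m"
    and q: "convex_on UNIV q" "0 \<le> K" "\<And>h. q h \<le> K * norm h"
    and min: "\<And>v. f w \<le> f v + ereal (q (v - w))"
  shows "\<exists>L\<in>subdiff f w. norm L \<le> K"
proof -
  define D where "D = {a. f (w + a) \<noteq> \<infinity>}"
  define F where "F a = real_of_ereal (f (w + a)) - m" for a
  have F: "f (w + a) = ereal (F a + m)" if "a \<in> D" for a
    using that f(2)[of "w + a"] unfolding D_def F_def by (cases "f (w + a)") auto
  have "convex_on D (\<lambda>a. real_of_ereal (f (w + a)))"
    unfolding D_def by (rule convex_on_real_of_convex_fun[OF f])
  then have "convex_on D F"
    unfolding F_def by (intro convex_on_diff) (simp_all add: concave_on_const convex_on_imp_convex)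
  moreover have "0 \<in> D" "F 0 = 0" using fw unfolding D_def F_def by simp_all
  moreover have "0 \<le> F a + q a" if "a \<in> D" for a
    using min[of "w + a"] F[OF that] fw by simp
  ultimately obtain L :: "'a \<Rightarrow>\<^sub>L real" where L: "norm L \<le> K" "\<forall>a\<in>D. blinfun_apply L a \<le> F a"
    using sandwich_theorem[of D F q K] q by blast
  have "ereal (blinfun_apply L (u - w)) \<le> f u - f w" for u
  proof (cases "u - w \<in> D")
    case True
    then show ?thesis using L(2) F[OF True] fw by simp
  next
    case False
    then show ?thesis using fw unfolding D_def by simp
  qed
  with fw L(1) show ?thesis unfolding subdiff_def by auto
qed

section \<open>Error bounds of perturbations\<close>

lemma Gamma0_not_MInf: "f \<in> Gamma0 \<Longrightarrow> f v \<noteq> -\<infinity>"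
  unfolding Gamma0_def proper_fun_def by auto

lemma Gamma0_convex_fun: "f \<in> Gamma0 \<Longrightarrow> convex_fun f"
  unfolding Gamma0_def by auto

lemma Gamma0_lsc_fun: "f \<in> Gamma0 \<Longrightarrow> lsc_fun f"
  unfolding Gamma0_def by auto

lemma subdiff_zero_value:
  "f x = 0 \<Longrightarrow> subdiff f x = {L. \<forall>u. ereal (blinfun_apply L (u - x)) \<le> f u}"
  unfolding subdiff_def by simp

lemma convex_on_blinfun_shift: "convex_on UNIV (\<lambda>u. blinfun_apply L (u - x))"
proof (rule convex_onI)
  fix t :: real and a b :: 'a
  have "(1 - t) *\<^sub>R a + t *\<^sub>R b - x = (1 - t) *\<^sub>R (a - x) + t *\<^sub>R (b - x)"
    by (simp add: algebra_simps)
  then show "blinfun_apply L ((1 - t) *\<^sub>R a + t *\<^sub>R b - x)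
      \<le> (1 - t) * blinfun_apply L (a - x) + t * blinfun_apply L (b - x)"
    by (simp add: blinfun.add_right blinfun.scaleR_right)
qed simp

lemma dst_nonneg: "0 \<le> dst x S"
  unfolding dst_def by (rule INF_greatest) simp

lemma dst_le: "u \<in> S \<Longrightarrow> dst x S \<le> ereal (norm (u - x))"
  unfolding dst_def by (rule INF_lower)

lemma Er_le: "0 < g v \<Longrightarrow> Er g \<le> g v / dst v (Sf g)"
  unfolding Er_def by (rule INF_lower) simp

lemma Er_geI:
  assumes c: "0 < c" and S: "Sf g \<noteq> {}"
    and bound: "\<And>u. 0 < g u \<Longrightarrow> g u \<noteq> \<infinity> \<Longrightarrow> ereal c * dst u (Sf g) \<le> g u"
  shows "ereal c \<le> Er g"
  unfolding Er_def
proof (rule INF_greatest, clarify)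
  fix u assume u: "0 < g u"
  obtain z where "z \<in> Sf g" using S by blast
  then obtain d where d: "dst u (Sf g) = ereal d" "0 \<le> d"
    using dst_le[of z "Sf g" u] dst_nonneg[of u "Sf g"] by (cases "dst u (Sf g)") auto
  show "ereal c \<le> g u / dst u (Sf g)"
  proof (cases "g u")
    case (real G)
    show ?thesis
    proof (cases "d = 0")
      case False
      then have "c * d \<le> G" using bound[OF u] real d by simp
      then show ?thesis using real d False by (simp add: pos_le_divide_eq mult.commute)
    qed (use real u d in simp)
  qed (use u d in simp_all)
qed

lemma ErF_antimono: "A \<subseteq> B \<Longrightarrow> ErF B \<le> ErF A"
  unfolding ErF_def by (rule INF_superset_mono) auto

lemma Ptbwl_subset_Ptbw: "Ptbwl f \<epsilon> \<subseteq> Ptbw f \<epsilon>"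
proof
  fix g assume "g \<in> Ptbwl f \<epsilon>"
  then obtain x L where x: "x \<in> Sfeq f" and L: "norm L \<le> \<epsilon>"
    and g: "g = (\<lambda>u. f u + ereal (blinfun_apply L (u - x)))"
    unfolding Ptbwl_def by blast
  have "\<bar>blinfun_apply L (u - x)\<bar> \<le> \<epsilon> * norm (u - x)" for u
    using order_trans[OF norm_blinfun mult_right_mono[OF L norm_ge_zero]] by simp
  moreover have "x \<in> Sf g" using x unfolding g Sf_def Sfeq_def by simp
  ultimately show "g \<in> Ptbw f \<epsilon>"
    unfolding Ptbw_def mem_Collect_eq
    by (intro conjI exI[of _ "\<lambda>u. blinfun_apply L (u - x)"] bexI[OF _ x])
      (use g convex_on_blinfun_shift[of L x] in auto)
qed

lemma Ptbl_subset_Ptb: "Ptbl f \<epsilon> \<subseteq> Ptb f \<epsilon>"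
proof
  fix g assume "g \<in> Ptbl f \<epsilon>"
  then obtain x \<xi> L where x: "x \<in> Sfeq f" and \<xi>: "0 \<le> \<xi>" and L: "norm L \<le> \<xi>"
    and cond: "ereal \<xi> + bdmod f \<le> ereal \<epsilon> + tau f x \<xi> 0"
    and g: "g = (\<lambda>u. f u + ereal (blinfun_apply L (u - x)))"
    unfolding Ptbl_def by blast
  have "\<bar>blinfun_apply L (u - x)\<bar> \<le> \<xi> * norm (u - x)" for u
    using order_trans[OF norm_blinfun mult_right_mono[OF L norm_ge_zero]] by simp
  moreover have "x \<in> Sf g" using x unfolding g Sf_def Sfeq_def by simp
  ultimately show "g \<in> Ptb f \<epsilon>"
    unfolding Ptb_def mem_Collect_eq
    by (intro conjI exI[of _ "\<lambda>u. blinfun_apply L (u - x)"] bexI[OF _ x] exI[of _ \<xi>])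
      (use g \<xi> cond convex_on_blinfun_shift[of L x] in auto)
qed

lemma dst_ge_of_halfspace:
  fixes w :: "'a::real_normed_vector \<Rightarrow>\<^sub>L real"
  assumes S: "\<And>u. u \<in> S \<Longrightarrow> blinfun_apply w u \<le> \<beta>"
  shows "ereal ((blinfun_apply w v - \<beta>) / norm w) \<le> dst v S"
  unfolding dst_def
proof (rule INF_greatest)
  fix u assume "u \<in> S"
  have "blinfun_apply w v - \<beta> \<le> blinfun_apply w (v - u)"
    using S[OF \<open>u \<in> S\<close>] by (simp add: blinfun.diff_right)
  also have "\<dots> \<le> norm w * norm (u - v)"
    using norm_blinfun[of w "v - u"] by (simp add: norm_minus_commute)
  finally show "ereal ((blinfun_apply w v - \<beta>) / norm w) \<le> ereal (norm (u - v))"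
    by (cases "norm w = 0") (auto simp: divide_le_eq mult.commute)
qed

text \<open>Tilting f by w - y', where y' is a subgradient at x and y' + w fails the subgradient
  inequality at v, puts the level set into the half-space where w(\<cdot> - x) \<le> 0 while keeping
  the value at v below twice its distance to that half-space times norm w.\<close>
lemma Er_tilt_le:
  fixes f :: "'a::real_normed_vector \<Rightarrow> ereal"
  assumes f: "f \<in> Gamma0" and fx: "f x = 0" and y': "y' \<in> subdiff f x"
    and v: "f v < ereal (blinfun_apply (y' + w) (v - x))"
  shows "Er (\<lambda>u. f u + ereal (blinfun_apply (w - y') (u - x))) \<le> ereal (2 * norm w)"
proof -
  define g where "g u = f u + ereal (blinfun_apply (w - y') (u - x))" for u
  have y'_le: "ereal (blinfun_apply y' (u - x)) \<le> f u" for u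
    using y' unfolding subdiff_zero_value[of f x, OF fx] by blast
  obtain fv where fv: "f v = ereal fv" using v Gamma0_not_MInf[OF f, of v] by (cases "f v") auto
  define h where "h = fv - blinfun_apply y' (v - x)"
  define a where "a = blinfun_apply w (v - x)"
  have h: "0 \<le> h" using y'_le[of v] fv unfolding h_def by simp
  have ha: "h < a" using v fv unfolding h_def a_def by (simp add: blinfun.add_left)
  have gv: "g v = ereal (h + a)"
    unfolding g_def fv h_def a_def by (simp add: blinfun.diff_left)
  have level: "blinfun_apply w u \<le> blinfun_apply w x" if "u \<in> Sf g" for u
  proof -
    have "f u + ereal (blinfun_apply (w - y') (u - x)) \<le> 0" using that unfolding Sf_def g_def
      by simp
    then have "ereal (blinfun_apply y' (u - x)) + ereal (blinfun_apply (w - y') (u - x)) \<le> 0"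
      using y'_le[of u] by (meson add_right_mono order_trans)
    then show ?thesis by (simp add: blinfun.diff_left blinfun.diff_right)
  qed
  have w: "0 < norm w" using h ha unfolding a_def by (cases "w = 0") auto
  obtain d where d: "dst v (Sf g) = ereal d" "a / norm w \<le> d"
  proof -
    have "x \<in> Sf g" using fx unfolding Sf_def g_def by simp
    moreover have "ereal (a / norm w) \<le> dst v (Sf g)"
      using dst_ge_of_halfspace[of "Sf g" w "blinfun_apply w x" v, OF level] unfolding a_def
      by (simp add: blinfun.diff_right)
    ultimately show ?thesis using that dst_le[of x "Sf g" v] by (cases "dst v (Sf g)") auto
  qed
  have d_pos: "0 < d" using d(2) h ha w by (smt (verit) divide_pos_pos)
  have "Er g \<le> ereal ((h + a) / d)"
    using Er_le[of g v] gv d(1) h ha d_pos by simp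
  also have "(h + a) / d \<le> 2 * a / (a / norm w)"
    using h ha d d_pos w by (intro frac_le) auto
  also have "2 * a / (a / norm w) = 2 * norm w" using h ha by simp
  finally show ?thesis unfolding g_def by simp
qed

lemma ErF_Ptbwl_lt:
  fixes f :: "'a::real_normed_vector \<Rightarrow> ereal"
  assumes f: "f \<in> Gamma0" and x: "x \<in> Sfeq f" and y: "y \<in> frontier (subdiff f x)"
    and y_\<epsilon>: "norm y < \<epsilon>" and \<rho>: "0 < \<rho>"
  shows "ErF (Ptbwl f \<epsilon>) < ereal \<rho>"
proof -
  have fx: "f x = 0" using x unfolding Sfeq_def by simp
  define r where "r = min ((\<epsilon> - norm y) / 3) (\<rho> / 4)"
  have "0 < r" using y_\<epsilon> \<rho> unfolding r_def by simp
  moreover have "r \<le> (\<epsilon> - norm y) / 3" "r \<le> \<rho> / 4"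
    unfolding r_def by (rule min.cobounded1, rule min.cobounded2)
  ultimately have r: "0 < r" "3 * r \<le> \<epsilon> - norm y" "4 * r \<le> \<rho>" by auto
  have y_cl: "y \<in> closure (subdiff f x)" and y_int: "y \<notin> interior (subdiff f x)"
    using y by (auto simp: frontier_def)
  obtain y' where y': "y' \<in> subdiff f x" "dist y' y < r"
    using y_cl r(1) unfolding closure_approachable by blast
  obtain z where z: "z \<notin> subdiff f x" "dist y z < r"
    using y_int r(1) unfolding mem_interior by (auto simp: subset_eq)
  then obtain v where v: "f v < ereal (blinfun_apply z (v - x))"
    unfolding subdiff_zero_value[of f x, OF fx] by (auto simp: not_le)
  define w where "w = z - y'"
  have w: "norm w < 2 * r"
    using dist_triangle[of z y' y] z(2) y'(2) unfolding w_def
    by (simp add: dist_norm norm_minus_commute)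
  have "norm (w - y') \<le> norm w + norm y'" by (rule norm_triangle_ineq4)
  also have "\<dots> \<le> \<epsilon>"
    using w y'(2) r(2) norm_triangle_ineq2[of y' y] by (simp add: dist_norm)
  finally have "(\<lambda>u. f u + ereal (blinfun_apply (w - y') (u - x))) \<in> Ptbwl f \<epsilon>"
    unfolding Ptbwl_def using x by blast
  then have "ErF (Ptbwl f \<epsilon>) \<le> ereal (2 * norm w)"
    unfolding ErF_def using Er_tilt_le[OF f fx y'(1), of v w] v unfolding w_def
    by (intro INF_lower2) auto
  also have "\<dots> < ereal \<rho>" using w r(3) by simp
  finally show ?thesis .
qed

theorem bdmod_ge_of_ErF_Ptbwl_pos:
  fixes f :: "'a::real_normed_vector \<Rightarrow> ereal"
  assumes f: "f \<in> Gamma0" and pos: "0 < ErF (Ptbwl f \<epsilon>)"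
  shows "ereal \<epsilon> \<le> bdmod f"
proof (rule ccontr)
  assume "\<not> ereal \<epsilon> \<le> bdmod f"
  then obtain x where x: "x \<in> Sfeq f" and "dst 0 (frontier (subdiff f x)) < ereal \<epsilon>"
    unfolding bdmod_def by (auto simp: not_le INF_less_iff)
  then obtain y where y: "y \<in> frontier (subdiff f x)" "norm y < \<epsilon>"
    unfolding dst_def by (auto simp: INF_less_iff)
  obtain \<rho> where \<rho>: "0 < ereal \<rho>" "ereal \<rho> < ErF (Ptbwl f \<epsilon>)" using ereal_dense2[OF pos] by blast
  then have "ErF (Ptbwl f \<epsilon>) < ereal \<rho>" using ErF_Ptbwl_lt[OF f x y] by simp
  with \<rho>(2) show False by simp
qed

lemma growth_of_interior_subdiff:
  fixes f :: "'a::real_normed_vector \<Rightarrow> ereal"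
  assumes fx: "f x = 0" and int: "0 \<in> interior (subdiff f x)"
    and \<rho>: "0 \<le> \<rho>" "ereal \<rho> < dst 0 (frontier (subdiff f x))"
  shows "ereal (\<rho> * norm (v - x)) \<le> f v"
proof -
  obtain L :: "'a \<Rightarrow>\<^sub>L real" where L: "norm L \<le> 1" "blinfun_apply L (v - x) = norm (v - x)"
    using norming_functional by blast
  have "norm (\<rho> *\<^sub>R L) \<le> \<rho>" using L(1) \<rho>(1) by (simp add: mult_left_le)
  then have "ereal (norm (\<rho> *\<^sub>R L)) < dst 0 (frontier (subdiff f x))"
    using \<rho>(2) by (meson ereal_less_eq(3) le_less_trans)
  then have "\<rho> *\<^sub>R L \<in> subdiff f x" by (rule mem_of_norm_less_dst_frontier[OF int])
  then have "ereal (\<rho> * blinfun_apply L (v - x)) \<le> f v"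
    unfolding subdiff_zero_value[of f x, OF fx] by (simp add: blinfun.scaleR_left)
  then show ?thesis using L(2) by simp
qed

text \<open>The witness is the point of the segment [x, u] at which the convexity bound for g vanishes.\<close>
lemma dst_level_set_le:
  fixes g :: "'a::real_normed_vector \<Rightarrow> ereal"
  assumes g: "convex_fun g" and x: "g x \<le> ereal gx" "gx \<le> 0" and u: "g u = ereal G" "0 < G"
    and c: "0 \<le> c" "c * norm (u - x) \<le> G - gx"
  shows "ereal c * dst u (Sf g) \<le> ereal G"
proof -
  define s where "s = - gx / (G - gx)"
  have s: "0 \<le> s" "s \<le> 1" "1 - s = G / (G - gx)" using x(2) u(2) unfolding s_def
    by (auto simp: field_simps)
  define z where "z = (1 - s) *\<^sub>R x + s *\<^sub>R u"
  have "g z \<le> ereal ((1 - s) * gx + s * G)"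
    unfolding z_def using convex_funD[OF g x(1) _ s(1,2)] u(1) by simp
  also have "(1 - s) * gx + s * G = 0"
    unfolding s(3) unfolding s_def using x(2) u(2) by (simp add: field_simps)
  finally have "z \<in> Sf g" unfolding Sf_def by (simp add: zero_ereal_def)
  then have "dst u (Sf g) \<le> ereal (norm (z - u))" by (rule dst_le)
  also have "norm (z - u) = G / (G - gx) * norm (u - x)"
  proof -
    have "z - u = (1 - s) *\<^sub>R (x - u)" unfolding z_def by (simp add: algebra_simps)
    then have "norm (z - u) = (1 - s) * norm (u - x)" using s(2) by (simp add: norm_minus_commute)
    then show ?thesis unfolding s(3) .
  qed
  finally have "ereal c * dst u (Sf g) \<le> ereal c * ereal (G / (G - gx) * norm (u - x))"
    using c(1) by (intro ereal_mult_left_mono) auto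
  also have "\<dots> = ereal (c * (G / (G - gx) * norm (u - x)))" by simp
  also have "c * (G / (G - gx) * norm (u - x)) = G / (G - gx) * (c * norm (u - x))" by simp
  also have "\<dots> \<le> G / (G - gx) * (G - gx)" using c(2) x(2) u(2) by (intro mult_left_mono) auto
  also have "\<dots> = G" using x(2) u(2) by simp
  finally show ?thesis by simp
qed

lemma Er_bound_interior:
  fixes f :: "'a::real_normed_vector \<Rightarrow> ereal" and p :: "'a \<Rightarrow> real"
  assumes f: "f \<in> Gamma0" "f x = 0" and p: "convex_on UNIV p" "\<And>u. p x - \<xi> * norm (u - x) \<le> p u"
    and \<xi>: "0 \<le> \<xi>" and c: "0 < c" and int: "0 \<in> interior (subdiff f x)"
    and bd: "ereal (\<xi> + 2 * c) \<le> dst 0 (frontier (subdiff f x))"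
    and S: "Sf (\<lambda>u. f u + ereal (p u)) \<noteq> {}" and u: "f u + ereal (p u) = ereal G" "0 < G"
  shows "ereal c * dst u (Sf (\<lambda>u. f u + ereal (p u))) \<le> ereal G"
proof -
  define g where "g u = f u + ereal (p u)" for u
  have "ereal (\<xi> + c) < ereal (\<xi> + 2 * c)" using c by simp
  then have "ereal (\<xi> + c) < dst 0 (frontier (subdiff f x))" using bd by (rule less_le_trans)
  then have grow: "ereal ((\<xi> + c) * norm (v - x)) \<le> f v" for v
    using growth_of_interior_subdiff[OF f(2) int] \<xi> c by simp
  have g_ge: "ereal (c * norm (v - x) + p x) \<le> g v" for v
  proof -
    have "ereal (c * norm (v - x) + p x)
        = ereal ((\<xi> + c) * norm (v - x)) + ereal (p x - \<xi> * norm (v - x))"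
      by (simp add: algebra_simps)
    also have "\<dots> \<le> g v" unfolding g_def using grow[of v] p(2)[of v] by (intro add_mono) auto
    finally show ?thesis .
  qed
  obtain z where "g z \<le> 0" using S unfolding Sf_def g_def by blast
  with g_ge[of z] have "ereal (c * norm (z - x) + p x) \<le> 0" by (rule order_trans)
  then have "c * norm (z - x) + p x \<le> 0" by (simp add: zero_ereal_def)
  moreover have "0 \<le> c * norm (z - x)" using c by simp
  ultimately have px: "p x \<le> 0" by linarith
  have "convex_fun g" unfolding g_def by (rule convex_fun_add[OF Gamma0_convex_fun[OF f(1)] p(1)])
  moreover have "g x \<le> ereal (p x)" unfolding g_def using f(2) by simp
  moreover have "c * norm (u - x) \<le> G - p x" using g_ge[of u] u(1) unfolding g_def by simp
  ultimately have "ereal c * dst u (Sf g) \<le> ereal G"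
    using dst_level_set_le[of g x "p x" u G c] px u c unfolding g_def by simp
  then show ?thesis unfolding g_def .
qed

text \<open>Ekeland's principle applied to g truncated to [0, G]: since u is farther than G / c from the
  level set, the Ekeland point w lies outside it, and there g + c\<parallel>\<cdot> - w\<parallel> is locally minimal.\<close>
lemma Ekeland_point_outside_level_set:
  fixes g :: "'a::banach \<Rightarrow> ereal"
  assumes g_lsc: "lsc_fun g" and g_fin: "\<And>v. g v \<noteq> -\<infinity>" and c: "0 < c"
    and u: "g u = ereal G" "0 < G" and far: "ereal G < ereal c * dst u (Sf g)"
  obtains w gw where "g w = ereal gw" "0 < gw"
    "\<forall>\<^sub>F v in nhds w. g w \<le> g v + ereal (c * norm (v - w))"
proof -
  define \<phi> where "\<phi> v = real_of_ereal (min (max (g v) 0) (ereal G))" for v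
  have \<phi>: "ereal (\<phi> v) = min (max (g v) 0) (ereal G)" for v
    unfolding \<phi>_def using g_fin[of v] u(2) by (cases "g v") (auto simp: min_def max_def)
  then have \<phi>_lsc: "lsc_fun (\<lambda>v. ereal (\<phi> v))" using lsc_fun_clamp[OF g_lsc] by presburger
  have \<phi>_nonneg: "0 \<le> \<phi> v" for v
  proof -
    have "ereal 0 \<le> ereal (\<phi> v)" unfolding \<phi> using u(2) by (simp add: le_max_iff_disj)
    then show ?thesis by simp
  qed
  have \<phi>_le: "ereal (\<phi> v) \<le> g v" if "0 < g v" for v using \<phi>[of v] that by simp
  have \<phi>_u: "\<phi> u = G" using \<phi>[of u] u by simp
  obtain w where w_u: "\<phi> w + c * dist w u \<le> G" and w_min: "\<And>v. v \<noteq> w \<Longrightarrow> \<phi> w < \<phi> v + c * dist v w"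
    using Ekeland_variational_principle[OF \<phi>_nonneg \<phi>_lsc c, of u] \<phi>_u by auto
  have gw_pos: "0 < g w"
  proof (rule ccontr)
    assume "\<not> 0 < g w"
    then have "dst u (Sf g) \<le> ereal (norm (w - u))" by (intro dst_le) (simp add: Sf_def)
    then have "ereal c * dst u (Sf g) \<le> ereal (c * dist w u)"
      using c ereal_mult_left_mono[of _ _ "ereal c"] by (fastforce simp: dist_norm)
    moreover have "c * dist w u \<le> G" using w_u \<phi>_nonneg[of w] by linarith
    ultimately have "ereal c * dst u (Sf g) \<le> ereal G" by (meson ereal_less_eq(3) order_trans)
    with far show False by (meson not_le)
  qed
  have gw_le: "g w \<le> ereal G"
  proof (rule ccontr)
    assume "\<not> g w \<le> ereal G"
    then have "\<phi> w = G" using \<phi>[of w] u(2) by (simp add: min_def)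
    then have "c * dist w u \<le> 0" using w_u by simp
    then have "w = u" using c by (simp add: mult_le_0_iff)
    with \<open>\<not> g w \<le> ereal G\<close> show False using u(1) by simp
  qed
  obtain gw where gw: "g w = ereal gw" using g_fin[of w] gw_le by (cases "g w") auto
  then have \<phi>_w: "\<phi> w = gw" using \<phi>[of w] gw_pos gw_le by simp
  have "\<forall>\<^sub>F v in nhds w. 0 < g v" using lsc_fun_eventually_nhds[OF g_lsc gw_pos] .
  then have "\<forall>\<^sub>F v in nhds w. g w \<le> g v + ereal (c * norm (v - w))"
  proof eventually_elim
    case (elim v)
    show ?case
    proof (cases "v = w")
      case False
      then have "ereal gw \<le> ereal (\<phi> v) + ereal (c * norm (v - w))"
        using w_min[of v] \<phi>_w by (simp add: dist_norm)
      also have "\<dots> \<le> g v + ereal (c * norm (v - w))" using \<phi>_le[OF elim] by (rule add_right_mono)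
      finally show ?thesis using gw by simp
    qed simp
  qed
  with gw gw_pos show ?thesis using that by simp
qed

lemma small_subgradient_outside_level_set:
  fixes f :: "'a::banach \<Rightarrow> ereal" and p :: "'a \<Rightarrow> real"
  assumes f: "f \<in> Gamma0" and p: "convex_on UNIV p" "\<xi>-lipschitz_on UNIV p" and c: "0 < c"
    and u: "f u + ereal (p u) = ereal G" "0 < G"
    and far: "ereal G < ereal c * dst u (Sf (\<lambda>u. f u + ereal (p u)))"
  shows "\<exists>w. 0 < f w + ereal (p w) \<and> (\<exists>L\<in>subdiff f w. norm L \<le> \<xi> + c)"
proof -
  define g where "g v = f v + ereal (p v)" for v
  have g_fin: "g v \<noteq> -\<infinity>" for v unfolding g_def using Gamma0_not_MInf[OF f, of v]
    by (cases "f v") auto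
  have "lsc_fun g" unfolding g_def
    by (rule lsc_fun_add_continuous[OF Gamma0_lsc_fun[OF f] Gamma0_not_MInf[OF f]
          lipschitz_on_continuous_on[OF p(2)]])
  then obtain w gw where gw: "g w = ereal gw" "0 < gw"
    and local_min: "\<forall>\<^sub>F v in nhds w. g w \<le> g v + ereal (c * norm (v - w))"
    using Ekeland_point_outside_level_set[OF _ g_fin c u[folded g_def] far[folded g_def]] by blast
  define h where "h v = f v + ereal (p v + c * dist w v)" for v
  have h_g: "h v = g v + ereal (c * norm (v - w))" for v
    unfolding h_def g_def by (simp add: dist_norm norm_minus_commute add.assoc)
  have "convex_fun h"
    unfolding h_def using convex_on_dist[of UNIV w] c
    by (intro convex_fun_add[OF Gamma0_convex_fun[OF f]] convex_on_add[OF p(1)] convex_on_cmul) auto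
  moreover have "h w = ereal gw" unfolding h_g using gw by simp
  moreover have "\<forall>\<^sub>F v in nhds w. h w \<le> h v" using local_min unfolding h_g by simp
  ultimately have h_min: "h w \<le> h v" for v by (intro convex_fun_local_min_global)
  obtain fw where fw: "f w = ereal fw" using gw g_fin unfolding g_def by (cases "f w") auto
  have "\<exists>L\<in>subdiff f w. norm L \<le> \<xi> + c"
  proof (rule subgradient_of_minimum[OF Gamma0_convex_fun[OF f] Gamma0_not_MInf[OF f] fw])
    show "convex_on UNIV (\<lambda>h. p (w + h) - p w + c * norm h)"
      using convex_on_dist[of UNIV 0] c
      by (intro convex_on_add convex_on_diff convex_on_translate[OF p(1)] convex_on_cmul)
        (auto simp: concave_on_const)
    show "0 \<le> \<xi> + c" using lipschitz_on_nonneg[OF p(2)] c by simp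
    show "p (w + h) - p w + c * norm h \<le> (\<xi> + c) * norm h" for h
      using lipschitz_onD[OF p(2), of "w + h" w] by (simp add: dist_norm algebra_simps)
    show "f w \<le> f v + ereal (p (w + (v - w)) - p w + c * norm (v - w))" for v
      using h_min[of v] fw unfolding h_def
      by (cases "f v") (auto simp: dist_norm norm_minus_commute)
  qed
  moreover have "0 < g w" using gw by simp
  ultimately show ?thesis unfolding g_def by blast
qed

lemma tau_le_of_far_point:
  fixes f :: "'a::banach \<Rightarrow> ereal" and p :: "'a \<Rightarrow> real"
  assumes f: "f \<in> Gamma0" and p: "convex_on UNIV p" and \<xi>: "0 \<le> \<xi>"
    and lip: "\<And>u. \<bar>p u - p x\<bar> \<le> \<xi> * norm (u - x)" and c: "0 < c"
    and not_int: "0 \<notin> interior (subdiff f x)"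
    and u: "f u + ereal (p u) = ereal G" "0 < G"
    and far: "ereal G < ereal c * dst u (Sf (\<lambda>u. f u + ereal (p u)))"
  shows "tau f x \<xi> \<bar>p x\<bar> \<le> ereal (\<xi> + c)"
proof -
  have "p v \<le> p x + \<xi> * norm (v - x)" for v using lip[of v] by (simp add: abs_le_iff)
  then have "\<xi>-lipschitz_on UNIV p" by (rule convex_on_lipschitz_on[OF p \<xi>])
  then obtain w L where w: "0 < f w + ereal (p w)" and L: "L \<in> subdiff f w" "norm L \<le> \<xi> + c"
    using small_subgradient_outside_level_set[OF f p _ c u far] by blast
  have "ereal (- \<xi> * norm (w - x) - \<bar>p x\<bar>) \<le> f w"
    using w lip[of w] Gamma0_not_MInf[OF f, of w] by (cases "f w") auto
  then have "w \<in> {u. ereal (- \<xi> * norm (u - x) - \<bar>p x\<bar>) \<le> f u}" by simp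
  then have "tau f x \<xi> \<bar>p x\<bar> \<le> dst 0 (subdiff f w)"
    unfolding tau_def using not_int by (simp only: if_False) (rule INF_lower)
  also have "\<dots> \<le> ereal (norm L)" using dst_le[OF L(1), of 0] by simp
  also have "\<dots> \<le> ereal (\<xi> + c)" using L(2) by simp
  finally show ?thesis .
qed

lemma Er_Ptb_ge:
  fixes f :: "'a::banach \<Rightarrow> ereal"
  assumes f: "f \<in> Gamma0" and c: "0 < c" and bd: "ereal (\<epsilon> + 2 * c) \<le> bdmod f"
    and g: "g \<in> Ptb f \<epsilon>"
  shows "ereal c \<le> Er g"
proof -
  obtain p x \<xi> where S: "Sf g \<noteq> {}" and p: "convex_on UNIV p"
    and g_def: "g = (\<lambda>u. f u + ereal (p u))"
    and x: "x \<in> Sfeq f" and \<xi>: "0 \<le> \<xi>" and cond: "ereal \<xi> + bdmod f \<le> ereal \<epsilon> + tau f x \<xi> \<bar>p x\<bar>"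
    and lip: "\<And>u. \<bar>p u - p x\<bar> \<le> \<xi> * norm (u - x)"
    using g unfolding Ptb_def by blast
  have fx: "f x = 0" using x unfolding Sfeq_def by simp
  have lower: "p x - \<xi> * norm (u - x) \<le> p u" for u using lip[of u] by (simp add: abs_le_iff)
  have "ereal \<epsilon> + ereal (\<xi> + 2 * c) \<le> ereal \<epsilon> + tau f x \<xi> \<bar>p x\<bar>"
    using add_left_mono[OF bd, of "ereal \<xi>"] cond by (simp add: algebra_simps)
  then have tau: "ereal (\<xi> + 2 * c) \<le> tau f x \<xi> \<bar>p x\<bar>"
    by (cases "tau f x \<xi> \<bar>p x\<bar>") auto
  show ?thesis
  proof (rule Er_geI[OF c S])
    fix u assume "0 < g u" "g u \<noteq> \<infinity>"
    then obtain G where G: "g u = ereal G" "0 < G" by (cases "g u") auto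
    show "ereal c * dst u (Sf g) \<le> g u"
    proof (cases "0 \<in> interior (subdiff f x)")
      case True
      then have "ereal (\<xi> + 2 * c) \<le> dst 0 (frontier (subdiff f x))" using tau
        by (simp add: tau_def)
      then show ?thesis
        using Er_bound_interior[OF f fx p lower \<xi> c True _ S[unfolded g_def]] G unfolding g_def
        by simp
    next
      case False
      show ?thesis
      proof (rule ccontr)
        assume "\<not> ?thesis"
        then have "tau f x \<xi> \<bar>p x\<bar> \<le> ereal (\<xi> + c)"
          using tau_le_of_far_point[OF f p \<xi> lip c False] G unfolding g_def by (simp add: not_le)
        with tau have "ereal (\<xi> + 2 * c) \<le> ereal (\<xi> + c)" by (rule order_trans)
        then show False using c by simp
      qed
    qed
  qed
qed

theorem ErF_Ptb_pos:
  fixes f :: "'a::banach \<Rightarrow> ereal"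
  assumes f: "f \<in> Gamma0" and lt: "ereal \<epsilon> < bdmod f"
  shows "0 < ErF (Ptb f \<epsilon>)"
proof -
  obtain b where b: "ereal \<epsilon> < ereal b" "ereal b < bdmod f" using ereal_dense2[OF lt] by blast
  define c where "c = (b - \<epsilon>) / 2"
  have "\<epsilon> + 2 * c = b" unfolding c_def by (simp add: field_simps)
  then have c: "0 < c" "ereal (\<epsilon> + 2 * c) \<le> bdmod f" using b unfolding c_def by auto
  have "ereal c \<le> ErF (Ptb f \<epsilon>)"
    unfolding ErF_def using Er_Ptb_ge[OF f c(1,2)] by (rule INF_greatest)
  moreover have "0 < ereal c" using c(1) by simp
  ultimately show ?thesis by (rule order.strict_trans2[rotated])
qed

theorem mainTheorem10:
  fixes f :: "'a::banach \<Rightarrow> ereal" and \<epsilon> :: real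
  assumes "f \<in> Gamma0" and "Sf f \<noteq> {}" and "\<epsilon> \<ge> 0"
  shows "(ErF (Ptbw f \<epsilon>) > 0 \<longrightarrow> ErF (Ptbwl f \<epsilon>) > 0)
       \<and> (ErF (Ptbwl f \<epsilon>) > 0 \<longrightarrow> ereal \<epsilon> \<le> bdmod f)
       \<and> (ereal \<epsilon> < bdmod f \<longrightarrow> ErF (Ptb f \<epsilon>) > 0)
       \<and> (ErF (Ptb f \<epsilon>) > 0 \<longrightarrow> ErF (Ptbl f \<epsilon>) > 0)"
  using ErF_antimono[OF Ptbwl_subset_Ptbw, of f \<epsilon>] ErF_antimono[OF Ptbl_subset_Ptb, of f \<epsilon>]
    bdmod_ge_of_ErF_Ptbwl_pos[OF assms(1)] ErF_Ptb_pos[OF assms(1)]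
  by (meson less_le_trans)

end
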